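(* Consider the planted submatrix problem with $\rho\le1/2$. Let $k\ge0$ be an integer, $D=2k+1$, and $f(Y)=\tau_k(Y_{11}/\lambda)$. For any $0<r<1$, if $\lambda\ge\frac{12}{r}\sqrt{\log4+2D\log(9/\rho)}$, then $\mathbb{E}(f(Y)-x)^2\le D^2r^{D-1}$.
   Context: Planted submatrix problem: observe $Y=\lambda vv^\top+W$ ($n\times n$), where $v\in\{0,1\}^n$ has i.i.d. $\mathrm{Bernoulli}(\rho)$ entries, $W$ is symmetric with $W_{ij}=W_{ji}\sim\mathcal{N}(0,1)$ for $i<j$, $W_{ii}\sim\mathcal{N}(0,2)$, the $\{W_{ij}:i\le j\}$ independent and independent of $v$; $\lambda>0$, $\rho\in(0,1)$; target $x=v_1$. $\tau_k(y)=(2k+1)\binom{2k}{k}\int_0^yt^k(1-t)^k\,dt$, a polynomial of degree $2k+1$. Logarithms are natural. *)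

theory Defs
  imports "HOL-Probability.Probability"
begin

text \<open>The polynomial tau_k(y) = (2k+1) binom(2k,k) int_0^y t^k (1-t)^k dt
  (oriented integral, so negative y is handled correctly).\<close>
definition tau :: "nat \<Rightarrow> real \<Rightarrow> real" where
  "tau k y = real (2*k+1) * real ((2*k) choose k) *
     (LBINT t=0..y. t ^ k * (1 - t) ^ k)"

end

theory Submission
  imports Defs
begin

text \<open>Since \<open>\<tau>\<^sub>k(0) = 0\<close>, \<open>\<tau>\<^sub>k(1) = 1\<close> (a Beta integral) and
  \<open>\<tau>\<^sub>k' = (2k+1) binom(2k,k) t\<^sup>k (1-t)\<^sup>k\<close> vanishes to order \<open>k\<close> at both \<open>0\<close> and \<open>1\<close>,
  the error \<open>\<tau>\<^sub>k(x + e) - x\<close> for \<open>x \<in> {0,1}\<close> is of order \<open>|e|\<^sup>k\<^sup>+\<^sup>1\<close> up to a factor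
  \<open>(1 + |e|)\<^sup>k\<close>. Here \<open>Y\<^sub>1\<^sub>1/\<lambda> = x + W\<^sub>1\<^sub>1/\<lambda>\<close>, and the even moments
  \<open>E W\<^sub>1\<^sub>1\<^sup>2\<^sup>m = (2m)!/m! \<le> (2m)\<^sup>m\<close> of the diagonal noise make the squared error at most
  a sum of powers of \<open>2D/\<lambda>\<^sup>2\<close>, which the hypothesis on \<open>\<lambda>\<close> makes smaller than
  \<open>r\<^sup>2/288\<close>. Only the diagonal entry \<open>Y\<^sub>1\<^sub>1\<close> enters, so symmetry, the
  off-diagonal noise and independence are not needed.\<close>

definition incomplete_beta_poly :: "nat \<Rightarrow> real \<Rightarrow> real" where
  "incomplete_beta_poly k y =
     (\<Sum>j\<le>k. real (k choose j) * (-1)^j * y^(k+j+1) / real (k+j+1))"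

lemma has_real_derivative_incomplete_beta_poly:
  "(incomplete_beta_poly k has_real_derivative t^k * (1 - t)^k) (at t)"
proof -
  have "((\<lambda>y. \<Sum>j\<le>k. real (k choose j) * (-1)^j * y^(k+j+1) / real (k+j+1))
      has_real_derivative
        (\<Sum>j\<le>k. real (k choose j) * (-1)^j * (real (k+j+1) * t^(k+j)) / real (k+j+1))) (at t)"
    by (intro DERIV_sum DERIV_cdivide DERIV_cmult) (use DERIV_pow[of "k+_+1" t] in simp)
  moreover have "(1 - t)^k = (\<Sum>j\<le>k. real (k choose j) * (-t)^j)"
    using binomial_ring[of "-t" 1 k] by simp
  then have "t^k * (1 - t)^k =
      (\<Sum>j\<le>k. real (k choose j) * (-1)^j * (real (k+j+1) * t^(k+j)) / real (k+j+1))"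
    by (simp add: sum_distrib_left power_minus[of t] power_add del: of_nat_add)
       (intro sum.cong refl, simp add: ac_simps)
  ultimately show ?thesis
    unfolding incomplete_beta_poly_def[abs_def] by simp
qed

lemma tau_eq_incomplete_beta_poly:
  "tau k y = real (2*k+1) * real ((2*k) choose k) * incomplete_beta_poly k y"
proof -
  have "(LBINT t=ereal 0..ereal y. t^k * (1 - t)^k) =
      incomplete_beta_poly k y - incomplete_beta_poly k 0"
    by (rule interval_integral_FTC_finite)
       (auto intro!: continuous_intros has_field_derivative_at_within
          has_real_derivative_incomplete_beta_poly
        simp: has_real_derivative_iff_has_vector_derivative[symmetric])
  then show ?thesis
    by (simp add: tau_def incomplete_beta_poly_def zero_ereal_def)
qed

lemma has_real_derivative_tau:
  "(tau k has_real_derivative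
      real (2*k+1) * real ((2*k) choose k) * (t^k * (1 - t)^k)) (at t)"
  unfolding tau_eq_incomplete_beta_poly[abs_def]
  by (intro DERIV_cmult has_real_derivative_incomplete_beta_poly)

lemma tau_0: "tau k 0 = 0"
  by (simp add: tau_def zero_ereal_def)

lemma incomplete_beta_poly_1:
  "incomplete_beta_poly k 1 = Beta (real k + 1) (real k + 1)"
proof -
  have "((\<lambda>t. t^k * (1 - t)^k) has_integral incomplete_beta_poly k 1 - incomplete_beta_poly k 0) {0..1}"
    by (rule fundamental_theorem_of_calculus)
       (auto intro!: has_field_derivative_at_within has_real_derivative_incomplete_beta_poly
        simp: has_real_derivative_iff_has_vector_derivative[symmetric])
  then have "((\<lambda>t. t^k * (1 - t)^k) has_integral incomplete_beta_poly k 1) {0<..<1}"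
    by (simp add: has_integral_Icc_iff_Ioo incomplete_beta_poly_def)
  moreover have "((\<lambda>t. t powr real k * (1 - t) powr real k) has_integral
      Beta (real k + 1) (real k + 1)) {0<..<1}"
    using has_integral_Beta_real[of "real k + 1" "real k + 1"]
    by (simp add: has_integral_Icc_iff_Ioo)
  then have "((\<lambda>t. t^k * (1 - t)^k) has_integral Beta (real k + 1) (real k + 1)) {0<..<1}"
    by (rule has_integral_eq[rotated]) (auto simp: powr_realpow)
  ultimately show ?thesis
    by (rule has_integral_unique)
qed

lemma tau_1: "tau k 1 = 1"
proof -
  have "Gamma (real k + 1) = fact k"
    using Gamma_fact[of k] by (simp add: add.commute)
  moreover have "Gamma (real k + 1 + (real k + 1)) = real (2*k+1) * fact (2*k)"
    using Gamma_fact[of "2*k+1"] by (simp add: add_ac fact_Suc)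
  moreover have "real ((2*k) choose k) = fact (2*k) / (fact k * fact k)"
    by (subst binomial_fact) (auto simp: mult_2)
  ultimately show ?thesis
    by (simp add: tau_eq_incomplete_beta_poly incomplete_beta_poly_1 Beta_def
        del: of_nat_add of_nat_mult)
qed

lemma abs_mult_one_minus_le:
  fixes x z a :: real
  assumes "x = 0 \<or> x = 1" and "\<bar>z - x\<bar> \<le> a"
  shows "\<bar>z\<bar> * \<bar>1 - z\<bar> \<le> a * (1 + a)"
  using assms
proof (elim disjE)
  assume "x = 0"
  then show ?thesis
    using assms(2) by (intro mult_mono) auto
next
  assume "x = 1"
  then show ?thesis
    using assms(2) by (subst mult.commute, intro mult_mono) auto
qed

lemma tau_abs_err_le:
  assumes x: "x = 0 \<or> x = 1"
  shows "\<bar>tau k (x + e) - x\<bar> \<le> real (2*k+1) * 4^k * (\<bar>e\<bar> * (1 + \<bar>e\<bar>))^k * \<bar>e\<bar>"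
proof -
  define B where "B = real (2*k+1) * 4^k * (\<bar>e\<bar> * (1 + \<bar>e\<bar>))^k"
  have "real ((2*k) choose k) \<le> 4^k"
    using binomial_le_pow2[of "2*k" k] by (simp add: power_mult flip: of_nat_le_iff)
  have deriv_bound: "norm (real (2*k+1) * real ((2*k) choose k) * (z^k * (1 - z)^k)) \<le> B"
    if "z \<in> closed_segment x (x + e)" for z
  proof -
    have "\<bar>z - x\<bar> \<le> \<bar>e\<bar>"
      using dist_in_closed_segment[OF that] by (simp add: dist_real_def)
    then have "(\<bar>z\<bar> * \<bar>1 - z\<bar>)^k \<le> (\<bar>e\<bar> * (1 + \<bar>e\<bar>))^k"
      using abs_mult_one_minus_le[OF x] by (intro power_mono) auto
    then have "real (2*k+1) * real ((2*k) choose k) * (\<bar>z\<bar> * \<bar>1 - z\<bar>)^k \<le> B"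
      unfolding B_def using \<open>real ((2*k) choose k) \<le> 4^k\<close>
      by (intro mult_mono mult_left_mono) auto
    then show ?thesis
      by (simp add: abs_mult power_abs power_mult_distrib)
  qed
  have "norm (tau k (x + e) - tau k x) \<le> B * norm (x + e - x)"
    by (rule field_differentiable_bound[OF convex_closed_segment
          has_field_derivative_at_within[OF has_real_derivative_tau] deriv_bound
          ends_in_segment(2) ends_in_segment(1)])
  moreover have "tau k x = x"
    using x tau_0 tau_1 by auto
  ultimately show ?thesis
    by (simp add: B_def)
qed

lemma one_plus_sq_pow_le:
  fixes a :: real
  assumes "0 \<le> a"
  shows "((1 + a)^2)^k \<le> 4^k * (1 + (a^2)^k)"
proof -
  have "(1 + a)^2 \<le> 4 * max 1 (a^2)"
  proof (cases "a \<le> 1")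
    case True
    then have "(1 + a)^2 \<le> 2^2"
      using assms by (intro power_mono) auto
    then show ?thesis by simp
  next
    case False
    then have "(1 + a)^2 \<le> (2*a)^2"
      using assms by (intro power_mono) auto
    then show ?thesis by (simp add: power_mult_distrib)
  qed
  then have "((1 + a)^2)^k \<le> (4 * max 1 (a^2))^k"
    by (intro power_mono) auto
  also have "\<dots> \<le> 4^k * (1 + (a^2)^k)"
    by (cases "a^2 \<le> 1") (auto simp: max_def power_mult_distrib)
  finally show ?thesis .
qed

lemma tau_sq_err_le:
  assumes "x = 0 \<or> x = 1"
  shows "(tau k (x + e) - x)^2 \<le>
    real (2*k+1)^2 * 64^k * ((e^2)^(k+1) + (e^2)^(2*k+1))"
proof -
  define a where "a = \<bar>e\<bar>"
  have "0 \<le> a" by (simp add: a_def)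
  have "(tau k (x + e) - x)^2 \<le> (real (2*k+1) * 4^k * (a * (1 + a))^k * a)^2"
    using tau_abs_err_le[OF assms, of k e] unfolding a_def
    by (metis abs_ge_zero power2_abs power_mono)
  also have "\<dots> = real (2*k+1)^2 * 16^k * (a^2)^(k+1) * ((1 + a)^2)^k"
  proof -
    have "(real (2*k+1) * 4^k * (a * (1 + a))^k * a)^2 =
        real (2*k+1)^2 * (4^2)^k * ((a^2)^k * a^2) * ((1 + a)^2)^k"
      unfolding power_mult_distrib power_even_eq[symmetric] power_mult by (simp only: mult_ac)
    then show ?thesis
      by (simp only: power_Suc2 Suc_eq_plus1) simp
  qed
  also have "\<dots> \<le> real (2*k+1)^2 * 16^k * (a^2)^(k+1) * (4^k * (1 + (a^2)^k))"
    using \<open>0 \<le> a\<close> by (intro mult_left_mono one_plus_sq_pow_le) auto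
  also have "\<dots> = real (2*k+1)^2 * 64^k * ((e^2)^(k+1) + (e^2)^(2*k+1))"
  proof -
    have "(16::real)^k * b^(k+1) * (4^k * (1 + b^k)) = 64^k * (b^(k+1) + b^(2*k+1))" for b
    proof -
      have "(64::real)^k = 16^k * 4^k"
        by (simp flip: power_mult_distrib)
      moreover have "b^(2*k+1) = b^(k+1) * b^k"
        by (simp add: power_add mult_2)
      ultimately show ?thesis
        by (simp only: algebra_simps)
    qed
    from this[of "e^2"] show ?thesis
      by (simp add: a_def mult.assoc)
  qed
  finally show ?thesis .
qed

lemma AE_zero_or_one_if_distr_bernoulli:
  assumes "X \<in> borel_measurable M"
    and "distr M borel X = distr (measure_pmf (bernoulli_pmf p)) borel (\<lambda>b. of_bool b)"
  shows "AE \<omega> in M. X \<omega> = 0 \<or> X \<omega> = (1::real)"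
proof -
  have "AE x in distr M borel X. x = 0 \<or> x = (1::real)"
    unfolding assms(2) by (subst AE_distr_iff) auto
  then show ?thesis
    by (subst (asm) AE_distr_iff) (auto simp: assms(1))
qed

lemma distributed_normal_even_moment:
  assumes "distributed M lborel X (normal_density \<mu> \<sigma>)" and "0 < \<sigma>"
  shows "integrable M (\<lambda>\<omega>. (X \<omega> - \<mu>)^(2*m))"
    and "(\<integral>\<omega>. (X \<omega> - \<mu>)^(2*m) \<partial>M) = fact (2*m) / ((2 / \<sigma>\<^sup>2)^m * fact m)"
proof -
  have meas: "(\<lambda>x. (x - \<mu>)^(2*m)) \<in> borel_measurable lborel"
    by simp
  note moment = normal_moment_even[OF assms(2), of \<mu> m, unfolded has_bochner_integral_iff]
  show "integrable M (\<lambda>\<omega>. (X \<omega> - \<mu>)^(2*m))"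
    using distributed_integrable[OF assms(1) meas] moment by simp
  show "(\<integral>\<omega>. (X \<omega> - \<mu>)^(2*m) \<partial>M) = fact (2*m) / ((2 / \<sigma>\<^sup>2)^m * fact m)"
    using distributed_integral[OF assms(1) meas] moment by simp
qed

lemma distributed_normal_sqrt2_scaled_moment:
  assumes "distributed M lborel X (normal_density 0 (sqrt 2))"
  shows "integrable M (\<lambda>\<omega>. ((X \<omega> / c)^2)^m)"
    and "(\<integral>\<omega>. ((X \<omega> / c)^2)^m \<partial>M) = fact (2*m) / fact m / c^(2*m)"
proof -
  have scaled: "((x / c)^2)^m = (x - 0)^(2*m) / c^(2*m)" for x :: real
    by (simp add: power_mult power_divide)
  show "integrable M (\<lambda>\<omega>. ((X \<omega> / c)^2)^m)"
    unfolding scaled using distributed_normal_even_moment(1)[OF assms] by simp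
  show "(\<integral>\<omega>. ((X \<omega> / c)^2)^m \<partial>M) = fact (2*m) / fact m / c^(2*m)"
    unfolding scaled using distributed_normal_even_moment(2)[OF assms] by simp
qed

lemma fact_double_div_fact_le: "(fact (2*m) :: real) / fact m \<le> real (2*m)^m"
proof -
  obtain q where q: "(fact (2*m) :: nat) = fact m * q"
    using fact_dvd[of m "2*m"] by (auto elim: dvdE)
  then have "q \<le> (2*m)^m"
    using fact_div_fact_le_pow[of m "2*m"] by simp
  then have "real q \<le> real (2*m)^m"
    by (metis of_nat_le_iff of_nat_power)
  then show ?thesis
    using arg_cong[OF q, of real] by (simp flip: of_nat_le_iff)
qed

lemma sq_ge_of_threshold:
  fixes lam \<rho> r :: real
  assumes "0 < \<rho>" "\<rho> \<le> 1/2" "0 < r"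
    and lam: "lam \<ge> 12 / r * sqrt (ln 4 + 2 * real D * ln (9 / \<rho>))"
  shows "lam^2 \<ge> 576 * real D / r^2"
proof -
  have "exp (2::real) = exp 1 ^ 2"
    by (simp flip: exp_of_nat_mult)
  also have "\<dots> \<le> 3^2"
    by (intro power_mono exp_le) auto
  also have "\<dots> \<le> 9 / \<rho>"
    using assms by (simp add: field_simps)
  finally have "2 \<le> ln (9 / \<rho>)"
    using assms by (simp add: ln_ge_iff)
  then have "4 * real D \<le> ln 4 + 2 * real D * ln (9 / \<rho>)"
    using mult_left_mono[of 2 "ln (9 / \<rho>)" "2 * real D"] ln_ge_zero[of "4::real"]
    by (simp; linarith)
  then have "12 / r * sqrt (4 * real D) \<le> lam"
    using lam assms by (meson order_trans real_sqrt_le_mono mult_left_mono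
        divide_nonneg_pos less_imp_le zero_le_numeral)
  then have "(12 / r * sqrt (4 * real D))^2 \<le> lam^2"
    using assms by (intro power_mono) auto
  then show ?thesis
    by (simp add: power_mult_distrib power_divide)
qed

text \<open>Both moments are at most \<open>s\<^sup>m\<close> with \<open>s = 2D/\<lambda>\<^sup>2 \<le> r\<^sup>2/288\<close>, and \<open>2 \<cdot> 64\<^sup>k \<le> 288\<^sup>k\<^sup>+\<^sup>1\<close>.\<close>
lemma moment_sum_le:
  fixes lam r :: real
  assumes "0 < r" "r < 1" "lam > 0" "lam^2 \<ge> 576 * real (2*k+1) / r^2"
  shows "64^k * (fact (2*(k+1)) / fact (k+1) / lam^(2*(k+1)) +
           fact (2*(2*k+1)) / fact (2*k+1) / lam^(2*(2*k+1))) \<le> r^(2*k)"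
proof -
  define s where "s = r^2 / 288"
  have s: "0 \<le> s" "s \<le> 1"
    unfolding s_def using assms power_le_one[of r 2] by auto
  have moment: "fact (2*m) / fact m / lam^(2*m) \<le> s^m" if "m \<le> 2*k+1" for m
  proof -
    have "real (2*m) \<le> 2 * real (2*k+1)"
      using that by simp
    also have "\<dots> = s * (576 * real (2*k+1) / r^2)"
      unfolding s_def using assms by (simp add: field_simps)
    also have "\<dots> \<le> s * lam^2"
      using assms s by (intro mult_left_mono) auto
    finally have "real (2*m) / lam^2 \<le> s"
      using assms by (simp add: divide_simps)
    have "fact (2*m) / fact m / lam^(2*m) \<le> real (2*m)^m / lam^(2*m)"
      using fact_double_div_fact_le[of m] assms by (intro divide_right_mono) auto
    also have "\<dots> = (real (2*m) / lam^2)^m"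
      by (simp add: power_divide power_mult)
    also have "\<dots> \<le> s^m"
      using \<open>real (2*m) / lam^2 \<le> s\<close> assms by (intro power_mono) auto
    finally show ?thesis .
  qed
  have "s^(2*k+1) \<le> s^(k+1)"
    using s by (intro power_decreasing) auto
  then have "64^k * (fact (2*(k+1)) / fact (k+1) / lam^(2*(k+1)) +
                fact (2*(2*k+1)) / fact (2*k+1) / lam^(2*(2*k+1))) \<le> 64^k * (2 * s^(k+1))"
    using moment[of "k+1"] moment[of "2*k+1"] by (intro mult_left_mono) auto
  also have "\<dots> = (2 * 64^k / 288^(k+1)) * (r^(2*k) * r^2)"
    unfolding s_def by (simp add: power_divide power_mult[symmetric] power_add mult_ac)
  also have "\<dots> \<le> 1 * (r^(2*k) * 1)"
  proof (rule mult_mono)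
    have "(64::real)^k \<le> 288^k"
      by (intro power_mono) auto
    then show "2 * 64^k / 288^(k+1) \<le> (1::real)"
      using zero_le_power[of "288::real" k] by (simp; linarith)
    show "r^(2*k) * r^2 \<le> r^(2*k) * 1"
      using assms by (intro mult_left_mono) (auto simp: power_le_one)
  qed (use assms in auto)
  finally show ?thesis by simp
qed

theorem mainTheorem11:
  fixes M :: "'a measure"
    and n :: nat and lam \<rho> r :: real and k :: nat
    and v :: "nat \<Rightarrow> 'a \<Rightarrow> real"
    and W :: "nat \<Rightarrow> nat \<Rightarrow> 'a \<Rightarrow> real"
  assumes "prob_space M"
    and "n \<ge> 1"
    and "lam > 0" and "0 < \<rho>" and "\<rho> \<le> 1/2"
    and v_rv: "\<And>i. i < n \<Longrightarrow> v i \<in> borel_measurable M"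
    and v_distr: "\<And>i. i < n \<Longrightarrow>
        distr M borel (v i) = distr (measure_pmf (bernoulli_pmf \<rho>)) borel (\<lambda>b. of_bool b)"
    and W_sym: "\<And>i j. i < n \<Longrightarrow> j < n \<Longrightarrow> W j i = W i j"
    and W_off: "\<And>i j. i < j \<Longrightarrow> j < n \<Longrightarrow>
        distributed M lborel (W i j) (normal_density 0 1)"
    and W_diag: "\<And>i. i < n \<Longrightarrow>
        distributed M lborel (W i i) (normal_density 0 (sqrt 2))"
    and indep: "prob_space.indep_vars M (\<lambda>_. borel)
        (\<lambda>s. case s of Inl i \<Rightarrow> v i | Inr (i, j) \<Rightarrow> W i j)
        (Inl ` {..<n} \<union> Inr ` {(i, j). i \<le> j \<and> j < n})"
    and "0 < r" and "r < 1"
    and lam: "lam \<ge> 12 / r * sqrt (ln 4 + 2 * real (2*k+1) * ln (9 / \<rho>))"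
  shows "prob_space.expectation M
           (\<lambda>\<omega>. (tau k ((lam * v 0 \<omega> * v 0 \<omega> + W 0 0 \<omega>) / lam) - v 0 \<omega>)\<^sup>2)
         \<le> real (2*k+1) ^ 2 * r ^ (2*k)"
proof -
  interpret prob_space M by fact
  define D where "D = real (2*k+1)"
  define bound where
    "bound w = D^2 * 64^k * (((w / lam)^2)^(k+1) + ((w / lam)^2)^(2*k+1))" for w
  have "0 < n" using \<open>n \<ge> 1\<close> by simp
  note W00 = distributed_normal_sqrt2_scaled_moment[OF W_diag[OF \<open>0 < n\<close>], of lam]
  have bound_integrable: "integrable M (\<lambda>\<omega>. bound (W 0 0 \<omega>))"
    unfolding bound_def by (intro integrable_mult_right Bochner_Integration.integrable_add W00(1))
  have AE_bound: "AE \<omega> in M. (tau k ((lam * v 0 \<omega> * v 0 \<omega> + W 0 0 \<omega>) / lam) - v 0 \<omega>)\<^sup>2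
      \<le> bound (W 0 0 \<omega>)"
    using AE_zero_or_one_if_distr_bernoulli[OF v_rv v_distr, OF \<open>0 < n\<close> \<open>0 < n\<close>]
  proof eventually_elim
    case (elim \<omega>)
    then have "(lam * v 0 \<omega> * v 0 \<omega> + W 0 0 \<omega>) / lam = v 0 \<omega> + W 0 0 \<omega> / lam"
      using \<open>lam > 0\<close> by (auto simp: field_simps)
    then show ?case
      using tau_sq_err_le[OF elim, of k "W 0 0 \<omega> / lam"] by (simp add: bound_def D_def)
  qed
  have "expectation (\<lambda>\<omega>. (tau k ((lam * v 0 \<omega> * v 0 \<omega> + W 0 0 \<omega>) / lam) - v 0 \<omega>)\<^sup>2)
      \<le> expectation (\<lambda>\<omega>. bound (W 0 0 \<omega>))"
    by (rule integral_mono_AE'[OF bound_integrable AE_bound]) (simp add: bound_def)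
  also have "\<dots> = D^2 * (64^k * (fact (2*(k+1)) / fact (k+1) / lam^(2*(k+1)) +
                 fact (2*(2*k+1)) / fact (2*k+1) / lam^(2*(2*k+1))))"
    unfolding bound_def integral_mult_right_zero W00(2)
      Bochner_Integration.integral_add[OF W00(1) W00(1)]
    by (simp only: mult.assoc)
  also have "\<dots> \<le> D^2 * r^(2*k)"
    using moment_sum_le[OF \<open>0 < r\<close> \<open>r < 1\<close> \<open>lam > 0\<close>
        sq_ge_of_threshold[OF \<open>0 < \<rho>\<close> \<open>\<rho> \<le> 1/2\<close> \<open>0 < r\<close> lam]]
    by (intro mult_left_mono) auto
  finally show ?thesis
    by (simp add: D_def)
qed

end
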